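(* Let $G_n=(V_n,E)$ be a directed acyclic graph on $n$ vertices, let $H$ be a $2$-TC-spanner of $G_n$, and let $f:V_n\to\mathbb{R}$ be $\epsilon$-far from monotone. Then at least $\frac{\epsilon n}{2}$ edges $(x,y)$ of $H$ are violated by $f$, i.e. satisfy $f(x)>f(y)$.
   Context: For a digraph $G=(V,E)$, $TC(G)$ denotes its transitive closure (edge $(u,v)$ iff $v$ is reachable from $u$ by a directed path). A $k$-TC-spanner of $G$ is a digraph $H=(V,E_H)$ with $E_H\subseteq E(TC(G))$ such that $d_H(u,v)\le k$ whenever $v$ is reachable from $u$ in $G$. $f:V_n\to\mathbb{R}$ is monotone on $G_n$ if $f(x)\le f(y)$ for all $(x,y)\in E$, and $\epsilon$-far from monotone if $\min_{g\text{ monotone}}|\{x:f(x)\neq g(x)\}|\ge\epsilon n$. *)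

theory Defs
  imports Main "HOL-Library.Library"
begin

definition digraph :: "'a set \<Rightarrow> ('a \<times> 'a) set \<Rightarrow> bool" where
  "digraph V E \<longleftrightarrow> finite V \<and> E \<subseteq> V \<times> V"

definition dist_le :: "('a \<times> 'a) set \<Rightarrow> 'a \<Rightarrow> 'a \<Rightarrow> nat \<Rightarrow> bool" where
  "dist_le EH u v k \<longleftrightarrow> (\<exists>i\<le>k. (u, v) \<in> EH ^^ i)"

definition is_TC_spanner :: "'a set \<Rightarrow> ('a \<times> 'a) set \<Rightarrow> ('a \<times> 'a) set \<Rightarrow> nat \<Rightarrow> bool" where
  "is_TC_spanner V E EH k \<longleftrightarrow> EH \<subseteq> E\<^sup>+ \<and> (\<forall>u v. (u, v) \<in> E\<^sup>+ \<longrightarrow> dist_le EH u v k)"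

definition monotone_on_graph :: "('a \<times> 'a) set \<Rightarrow> ('a \<Rightarrow> real) \<Rightarrow> bool" where
  "monotone_on_graph E f \<longleftrightarrow> (\<forall>(x, y) \<in> E. f x \<le> f y)"

definition eps_far :: "'a set \<Rightarrow> ('a \<times> 'a) set \<Rightarrow> real \<Rightarrow> ('a \<Rightarrow> real) \<Rightarrow> bool" where
  "eps_far V E \<epsilon> f \<longleftrightarrow>
     (\<forall>g. monotone_on_graph E g \<longrightarrow> real (card {x \<in> V. f x \<noteq> g x}) \<ge> \<epsilon> * real (card V))"

definition violated_edges :: "('a \<times> 'a) set \<Rightarrow> ('a \<Rightarrow> real) \<Rightarrow> ('a \<times> 'a) set" where
  "violated_edges EH f = {(x, y) \<in> EH. f x > f y}"

end

theory Submission
  imports Defs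
begin

(* Let S be the set of endpoints of the edges of the 2-TC-spanner H that f
   violates; clearly |S| \<le> 2 |violated edges|.  For u, x outside S with x reachable from u,
   the spanner contains a path u \<leadsto> x of at most two edges; if f u > f x, one of these
   edges is violated, and every such edge touches u or x, contradicting u, x \<notin> S.  Hence f
   is monotone along reachability on V - S.  Such a function can be repaired into a
   monotone g on the whole graph by changing it only on S: put g x = max of f over the
   vertices of V - S that reach x.  Thus f is at most |S|-close to monotone, and
   \<epsilon>-farness gives \<epsilon> n \<le> |S| \<le> 2 |violated edges|. *)

definition violation_endpoints :: "('a \<times> 'a) set \<Rightarrow> ('a \<Rightarrow> real) \<Rightarrow> 'a set" where
  "violation_endpoints EH f = fst ` violated_edges EH f \<union> snd ` violated_edges EH f"

lemma card_endpoints_le: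
  assumes "finite W"
  shows "card (fst ` W \<union> snd ` W) \<le> 2 * card W"
proof -
  have "card (fst ` W \<union> snd ` W) \<le> card (fst ` W) + card (snd ` W)" by (rule card_Un_le)
  also have "\<dots> \<le> card W + card W" using card_image_le[OF assms] by (meson add_mono)
  finally show ?thesis by simp
qed

lemma two_hop_violation:
  assumes path: "(u, x) \<in> EH ^^ i" and short: "i \<le> 2" and decrease: "f x < f u"
  shows "u \<in> violation_endpoints EH f \<or> x \<in> violation_endpoints EH f"
proof -
  have violated: "(a, b) \<in> violated_edges EH f" if "(a, b) \<in> EH" "f b < f a" for a b
    using that by (simp add: violated_edges_def)
  consider "i = 0" | "i = 1" | "i = 2" using short by linarith
  then show ?thesis
  proof cases
    case 1
    then show ?thesis using path decrease by simp
  next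
    case 2
    then have "(u, x) \<in> violated_edges EH f" using path decrease violated by simp
    then show ?thesis unfolding violation_endpoints_def by force
  next
    case 3
    then obtain z where uz: "(u, z) \<in> EH" and zx: "(z, x) \<in> EH"
      using path by (auto simp: numeral_2_eq_2)
    have "f z < f u \<or> f x < f z" using decrease by linarith
    then show ?thesis
    proof
      assume "f z < f u"
      then have "(u, z) \<in> violated_edges EH f" using uz violated by blast
      then show ?thesis unfolding violation_endpoints_def by force
    next
      assume "f x < f z"
      then have "(z, x) \<in> violated_edges EH f" using zx violated by blast
      then show ?thesis unfolding violation_endpoints_def by force
    qed
  qed
qed

lemma spanner_monotone_off_endpoints:
  assumes "is_TC_spanner V E EH 2"
    and reach: "(u, x) \<in> E\<^sup>*"
    and "u \<notin> violation_endpoints EH f" "x \<notin> violation_endpoints EH f"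
  shows "f u \<le> f x"
proof (cases "u = x")
  case False
  then have "(u, x) \<in> E\<^sup>+" using reach by (meson rtranclD)
  then obtain i where "i \<le> 2" "(u, x) \<in> EH ^^ i"
    using assms(1) unfolding is_TC_spanner_def dist_le_def by blast
  then show ?thesis using two_hop_violation[where EH = EH and f = f] assms(3,4) by (meson not_le)
qed simp

text \<open>The repaired value at x is the
  largest value of f on vertices of V - S reaching x (with a default lower bound L).\<close>
lemma monotone_repair:
  fixes f :: "'a \<Rightarrow> real"
  assumes finV: "finite V"
    and mono_off_S: "\<And>u x. u \<in> V - S \<Longrightarrow> x \<in> V - S \<Longrightarrow> (u, x) \<in> E\<^sup>* \<Longrightarrow> f u \<le> f x"
  shows "\<exists>g. monotone_on_graph E g \<and> (\<forall>x \<in> V - S. g x = f x)"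
proof -
  define L where "L = Min (insert 0 (f ` V))"
  define R where "R x = {u \<in> V - S. (u, x) \<in> E\<^sup>*}" for x
  define g where "g x = Max (insert L (f ` R x))" for x
  have fin: "finite (insert L (f ` R x))" for x using finV by (simp add: R_def)
  have "monotone_on_graph E g"
    unfolding monotone_on_graph_def
  proof clarify
    fix x y assume "(x, y) \<in> E"
    then have "R x \<subseteq> R y" by (auto simp: R_def intro: rtrancl_into_rtrancl)
    then show "g x \<le> g y" unfolding g_def by (intro Max_mono fin) auto
  qed
  moreover have "g x = f x" if x: "x \<in> V - S" for x
  proof -
    have "L \<le> f x" unfolding L_def using x finV by (intro Min_le) auto
    moreover have "\<forall>a \<in> f ` R x. a \<le> f x" using mono_off_S x by (auto simp: R_def)
    moreover have "f x \<in> f ` R x" using x by (auto simp: R_def)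
    ultimately show ?thesis unfolding g_def
      by (intro antisym Max.boundedI Max_ge fin) auto
  qed
  ultimately show ?thesis by blast
qed

theorem mainTheorem2:
  fixes V :: "'a set" and E EH :: "('a \<times> 'a) set" and f :: "'a \<Rightarrow> real" and \<epsilon> :: real
  assumes "digraph V E"
    and "acyclic E"
    and "is_TC_spanner V E EH 2"
    and "eps_far V E \<epsilon> f"
  shows "real (card (violated_edges EH f)) \<ge> \<epsilon> * real (card V) / 2"
proof -
  define S where "S = violation_endpoints EH f"
  have finV: "finite V" and "E \<subseteq> V \<times> V" using assms(1) by (auto simp: digraph_def)
  then have "EH \<subseteq> V \<times> V"
    using assms(3) trancl_subset_Sigma unfolding is_TC_spanner_def by blast
  then have fin_violated: "finite (violated_edges EH f)"
    using finV by (auto simp: violated_edges_def intro: finite_subset)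
  obtain g where g_mono: "monotone_on_graph E g" and g_eq: "\<forall>x \<in> V - S. g x = f x"
    using monotone_repair[OF finV] spanner_monotone_off_endpoints[OF assms(3)]
    unfolding S_def by blast
  have "{x \<in> V. f x \<noteq> g x} \<subseteq> S" using g_eq by force
  then have "card {x \<in> V. f x \<noteq> g x} \<le> card S"
    using fin_violated by (intro card_mono) (auto simp: S_def violation_endpoints_def)
  also have "\<dots> \<le> 2 * card (violated_edges EH f)"
    unfolding S_def violation_endpoints_def by (rule card_endpoints_le[OF fin_violated])
  finally have "real (card {x \<in> V. f x \<noteq> g x}) \<le> 2 * real (card (violated_edges EH f))"
    by linarith
  moreover have "\<epsilon> * real (card V) \<le> real (card {x \<in> V. f x \<noteq> g x})"
    using assms(4) g_mono unfolding eps_far_def by blast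
  ultimately show ?thesis by linarith
qed

end
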